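(* Assume the Dickson--Hardy--Littlewood conjecture: every admissible tuple of natural numbers is prime-producing. Let $k \geq 1$. Then every good $k$-tuple $(p_1,\dots,p_k)$ can be extended to a good $(k+1)$-tuple $(p_1,\dots,p_k,p_{k+1})$.
   Context: A tuple $(h_1,\dots,h_k)$ of natural numbers is admissible if for every prime $p$ there is at least one residue class mod $p$ containing none of $h_1,\dots,h_k$. A tuple is prime-producing if there are infinitely many integers $n$ such that $n+h_1,\dots,n+h_k$ are all prime. A good $k$-tuple is an increasing $k$-tuple $(p_1,\dots,p_k)$ of primes with $3 < p_1 < \dots < p_k$ such that, for all $1 \le i < j \le k$, the number $p_i+p_j+1$ is prime and $p_i$ does not divide $p_j+2$. *)

theory Defs
  imports "HOL-Computational_Algebra.Primes"
begin

definition admissible :: "nat list \<Rightarrow> bool" where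
  "admissible hs \<longleftrightarrow>
     (\<forall>p::nat. prime p \<longrightarrow> (\<exists>r<p. \<forall>i<length hs. hs ! i mod p \<noteq> r))"

definition prime_producing :: "nat list \<Rightarrow> bool" where
  "prime_producing hs \<longleftrightarrow>
     infinite {n::nat. \<forall>i<length hs. prime (n + hs ! i)}"

definition DHL_conjecture :: bool where
  "DHL_conjecture \<longleftrightarrow> (\<forall>hs. admissible hs \<longrightarrow> prime_producing hs)"

definition good_tuple :: "nat \<Rightarrow> nat list \<Rightarrow> bool" where
  "good_tuple k ps \<longleftrightarrow>
     length ps = k \<and>
     (\<forall>i<k. prime (ps ! i) \<and> 3 < ps ! i) \<and>
     (\<forall>i j. i < j \<and> j < k \<longrightarrow>
        ps ! i < ps ! j \<and> prime (ps ! i + ps ! j + 1) \<and> \<not> (ps ! i dvd ps ! j + 2))"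

end

theory Submission
  imports Defs "HOL-Library.Infinite_Set"
begin

text \<open>For a good tuple \<open>(p\<^sub>1, \<dots>, p\<^sub>k)\<close> the shifts \<open>0, 2, p\<^sub>1 + 1, \<dots>, p\<^sub>k + 1\<close> are
  admissible. A prime \<open>p\<close> outside the tuple misses the residue 1, since \<open>p\<^sub>i + 1 \<equiv> 1\<close>
  would force \<open>p = p\<^sub>i\<close>; \<open>p = 5\<close> misses 4, because \<open>5\<close> does not divide \<open>p\<^sub>i + 2\<close>.
  A larger \<open>p\<close> misses \<open>-2\<close> or \<open>3\<close>: hitting both, say by \<open>a + 1\<close> and \<open>b + 1\<close>, would make
  \<open>p\<close> divide the prime \<open>a + b + 1\<close>, which exceeds \<open>p\<close> as \<open>b \<equiv> 2\<close>.
  The conjecture then gives \<open>q\<close> beyond all \<open>p\<^sub>i\<close> with \<open>q\<close>, \<open>q + 2\<close> and all \<open>q + p\<^sub>i + 1\<close>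
  prime, and \<open>q\<close> extends the tuple; no \<open>p\<^sub>i\<close> divides the prime \<open>q + 2\<close>.\<close>

lemma admissible_iff_missed_residue:
  "admissible hs \<longleftrightarrow> (\<forall>p::nat. prime p \<longrightarrow> (\<exists>r<p. \<forall>h\<in>set hs. h mod p \<noteq> r))"
  by (simp add: admissible_def all_set_conv_all_nth)

lemma prime_producing_iff:
  "prime_producing hs \<longleftrightarrow> infinite {n::nat. \<forall>h\<in>set hs. prime (n + h)}"
  by (simp add: prime_producing_def all_set_conv_all_nth)

definition good_set :: "nat set \<Rightarrow> bool" where
  "good_set A \<longleftrightarrow>
     (\<forall>x\<in>A. prime x \<and> 3 < x) \<and>
     (\<forall>x\<in>A. \<forall>y\<in>A. x \<noteq> y \<longrightarrow> prime (x + y + 1)) \<and>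
     (\<forall>x\<in>A. \<forall>y\<in>A. x < y \<longrightarrow> \<not> x dvd y + 2)"

lemma good_tuple_good_set:
  assumes "good_tuple k ps"
  shows "good_set (set ps)"
proof -
  have len: "length ps = k"
    and elems: "\<forall>i<k. prime (ps ! i) \<and> 3 < ps ! i"
    and pairs: "\<forall>i j. i < j \<and> j < k \<longrightarrow>
        ps ! i < ps ! j \<and> prime (ps ! i + ps ! j + 1) \<and> \<not> ps ! i dvd ps ! j + 2"
    using assms unfolding good_tuple_def by auto
  have sums: "prime (ps ! i + ps ! j + 1)" if "i < k" "j < k" "ps ! i \<noteq> ps ! j" for i j
    using pairs[rule_format, of i j] pairs[rule_format, of j i] that
    by (cases i j rule: linorder_cases) (auto simp: add.commute add.left_commute)
  have not_dvd: "\<not> ps ! i dvd ps ! j + 2" if "i < k" "j < k" "ps ! i < ps ! j" for i j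
    using pairs[rule_format, of i j] pairs[rule_format, of j i] that
    by (cases i j rule: linorder_cases) auto
  show ?thesis
    unfolding good_set_def all_set_conv_all_nth len using elems sums not_dvd by blast
qed

lemma good_tuple_snocI:
  assumes "good_tuple k ps" "prime q" "3 < q"
    and "\<forall>x\<in>set ps. x < q \<and> prime (x + q + 1) \<and> \<not> x dvd q + 2"
  shows "good_tuple (Suc k) (ps @ [q])"
proof -
  have len: "length ps = k" using assms(1) unfolding good_tuple_def by simp
  have last: "(ps @ [q]) ! k = q" and init: "(ps @ [q]) ! i = ps ! i" if "i < k" for i
    using len that by (auto simp: nth_append)
  have "prime ((ps @ [q]) ! i) \<and> 3 < (ps @ [q]) ! i" if "i < Suc k" for i
    using that assms(1-3) last init by (cases "i = k") (auto simp: good_tuple_def)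
  moreover have "(ps @ [q]) ! i < (ps @ [q]) ! j \<and> prime ((ps @ [q]) ! i + (ps @ [q]) ! j + 1)
      \<and> \<not> (ps @ [q]) ! i dvd (ps @ [q]) ! j + 2" if "i < j" "j < Suc k" for i j
  proof (cases "j = k")
    case True
    then have "ps ! i \<in> set ps" using that len by simp
    then show ?thesis using True that assms(4) last init by auto
  next
    case False
    then show ?thesis using that assms(1) init by (auto simp: good_tuple_def)
  qed
  ultimately show ?thesis using len unfolding good_tuple_def by auto
qed

lemma Suc_mod_prime_eq_one_imp_eq:
  fixes p x :: nat
  assumes "prime p" "prime x" "Suc x mod p = 1"
  shows "x = p"
proof -
  have "Suc x mod p = Suc 0 mod p" using assms(3) prime_gt_1_nat[OF assms(1)] by simp
  then have "p dvd x" using mod_eq_dvd_iff_nat[of "Suc 0" "Suc x" p] by simp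
  then show ?thesis using assms(1,2) primes_dvd_imp_eq by metis
qed

lemma good_set_missed_residue_five:
  assumes "good_set A" "5 \<in> A" "x \<in> A"
  shows "Suc x mod 5 \<noteq> 4"
proof
  assume "Suc x mod 5 = 4"
  then have "x mod 5 = 3" by presburger
  then have "5 dvd x + 2" "x \<noteq> 4" "x \<noteq> 5" by presburger+
  moreover have "3 < x" using assms(1,3) unfolding good_set_def by blast
  ultimately show False using assms unfolding good_set_def by auto
qed

lemma good_set_missed_residue_large_prime:
  assumes good: "good_set A" and p: "prime p" "5 < p"
  shows "(\<forall>x\<in>A. Suc x mod p \<noteq> p - 2) \<or> (\<forall>x\<in>A. Suc x mod p \<noteq> 3)"
proof (rule ccontr)
  assume "\<not> ?thesis"
  then obtain a b where a: "a \<in> A" "Suc a mod p = p - 2" and b: "b \<in> A" "Suc b mod p = 3"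
    by auto
  have "(Suc a + 2) mod p = (Suc a mod p + 2) mod p" by (simp only: mod_add_left_eq)
  moreover have "Suc a mod p + 2 = p" using a(2) p(2) by simp
  ultimately have a_dvd: "p dvd Suc a + 2" by (simp add: dvd_eq_mod_eq_0)
  have b_mod: "b mod p = 2" using b(2) by (simp add: mod_Suc split: if_splits)
  then have b_eq: "b = b div p * p + 2" using div_mult_mod_eq[of b p] by simp
  have "a \<noteq> b"
  proof
    assume "a = b"
    then have "Suc a + 2 = b div p * p + 5" using b_eq by linarith
    then have "p dvd b div p * p + 5" using a_dvd by metis
    then have "p dvd 5" by (metis dvd_add_right_iff dvd_triv_right)
    then show False using p(2) by (auto dest: dvd_imp_le)
  qed
  then have prime_sum: "prime (a + b + 1)" using good a(1) b(1) unfolding good_set_def by blast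
  have "a + b + 1 = (Suc a + 2) + b div p * p" using b_eq by linarith
  then have "p dvd a + b + 1" using a_dvd by (metis dvd_add dvd_triv_right)
  then have "a + b + 1 = p" using p(1) prime_sum primes_dvd_imp_eq by metis
  moreover have "p < b"
  proof -
    have "3 < b" using good b(1) unfolding good_set_def by blast
    then have "\<not> b < p" "b \<noteq> p" using b_mod by auto
    then show ?thesis by simp
  qed
  ultimately show False by simp
qed

lemma admissible_extension_shifts:
  assumes good: "good_set (set ps)"
  shows "admissible (0 # 2 # map Suc ps)"
  unfolding admissible_iff_missed_residue
proof (intro allI impI)
  fix p :: nat
  assume p: "prime p"
  have missed: "\<exists>r<p. \<forall>h\<in>set (0 # 2 # map Suc ps). h mod p \<noteq> r"
    if "0 < r" "r < p" "2 mod p \<noteq> r" "\<forall>x\<in>set ps. Suc x mod p \<noteq> r" for r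
    using that by auto
  have "5 < p" if "p \<in> set ps" "p \<noteq> 5"
  proof -
    have "3 < p" using that(1) good unfolding good_set_def by blast
    then have "odd p" using prime_odd_nat[OF p] by simp
    then show ?thesis using \<open>3 < p\<close> that(2) by presburger
  qed
  then consider "p \<notin> set ps" | "p = 5" "5 \<in> set ps" | "5 < p" by blast
  then show "\<exists>r<p. \<forall>h\<in>set (0 # 2 # map Suc ps). h mod p \<noteq> r"
  proof cases
    case 1
    have "\<forall>x\<in>set ps. Suc x mod p \<noteq> 1"
      using Suc_mod_prime_eq_one_imp_eq[OF p] 1 good unfolding good_set_def by blast
    moreover have "2 mod p \<noteq> 1" using prime_gt_1_nat[OF p] by (cases "p = 2") auto
    ultimately show ?thesis using missed[of 1] prime_gt_1_nat[OF p] by simp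
  next
    case 2
    then show ?thesis using missed[of 4] good_set_missed_residue_five[OF good] by simp
  next
    case 3
    from good_set_missed_residue_large_prime[OF good p 3] show ?thesis
    proof
      assume "\<forall>x\<in>set ps. Suc x mod p \<noteq> p - 2"
      then show ?thesis using missed[of "p - 2"] 3 by simp
    next
      assume "\<forall>x\<in>set ps. Suc x mod p \<noteq> 3"
      then show ?thesis using missed[of 3] 3 by simp
    qed
  qed
qed

theorem mainTheorem2:
  assumes "DHL_conjecture"
    and "k \<ge> 1"
    and "good_tuple k ps"
  shows "\<exists>q::nat. good_tuple (k + 1) (ps @ [q])"
proof -
  have good: "good_set (set ps)" using assms(3) by (rule good_tuple_good_set)
  have "ps \<noteq> []" using assms(2,3) unfolding good_tuple_def by auto
  then obtain p where p: "p \<in> set ps" using hd_in_set by blast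
  have "admissible (0 # 2 # map Suc ps)" using good by (rule admissible_extension_shifts)
  then have "infinite {n. \<forall>h\<in>set (0 # 2 # map Suc ps). prime (n + h)}"
    using assms(1) unfolding DHL_conjecture_def prime_producing_iff by blast
  then obtain q where q_large: "Max (set ps) < q"
    and q_shifts: "\<forall>h\<in>set (0 # 2 # map Suc ps). prime (q + h)"
    unfolding infinite_nat_iff_unbounded by blast
  then have q_prime: "prime q" "prime (q + 2)" "\<forall>x\<in>set ps. prime (x + q + 1)"
    by (simp_all add: add.commute)
  have below: "x < q" if "x \<in> set ps" for x
    using that q_large by (meson Max_ge finite_set le_less_trans)
  have "\<not> x dvd q + 2" if "x \<in> set ps" for x
    using below[OF that] good that q_prime(2) unfolding good_set_def prime_nat_iff by fastforce
  moreover have "3 < q" using below[OF p] good p unfolding good_set_def by fastforce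
  ultimately have "good_tuple (Suc k) (ps @ [q])"
    using good_tuple_snocI[OF assms(3) q_prime(1)] below q_prime(3) by blast
  then show ?thesis by auto
qed

end
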